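(* Let $X$ be an infinite-dimensional separable (real or complex) Banach space and let $A$ be an operator in $X$ satisfying all hypotheses of Theorem 2.1: $A$ is densely defined, $A^r$ is closed for all $r\ge1$, and there are a dense set $X_0\subset\bigcap_n D(A^n)$ and $B:X_0\to X_0$ with $ABx=x$, and $\sum_{n\ge1}A^nx$, $\sum_{n\ge1}B^nx$ unconditionally convergent for all $x\in X_0$. Then for every $n\in\mathbb{N}$ the power $A^n$ is frequently hypercyclic.
   Context: A series $\sum_k x_k$ converges unconditionally if for every $\varepsilon>0$ there is $N$ with $\|\sum_{k\in F}x_k\|<\varepsilon$ for every finite $F\subset\mathbb{N}$ disjoint from $\{1,\dots,N\}$. An operator $T$ is frequently hypercyclic if there is $f\in D(T)$ with $T^mf\in D(T)$ for all $m\ge1$ such that for every non-empty open $U\subset X$ the set $\{m: T^mf\in U\}$ has positive lower density, where the lower density of $E\subset\mathbb{N}$ is $\liminf_{N}\#(E\cap\{1,\dots,N\})/N$. *)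

theory Defs
  imports "HOL-Analysis.Analysis" "HOL-Library.Liminf_Limsup"
begin

text \<open>An (unbounded) operator in X is modelled by a domain D and a map A,
  only the values of A on D being relevant.\<close>

definition linear_operator_on :: "'a::real_vector set \<Rightarrow> ('a \<Rightarrow> 'a) \<Rightarrow> bool" where
  "linear_operator_on D A \<longleftrightarrow> subspace D \<and>
     (\<forall>x\<in>D. \<forall>y\<in>D. A (x + y) = A x + A y) \<and>
     (\<forall>c. \<forall>x\<in>D. A (c *\<^sub>R x) = c *\<^sub>R A x)"

definition dom_pow :: "'a set \<Rightarrow> ('a \<Rightarrow> 'a) \<Rightarrow> nat \<Rightarrow> 'a set" where
  "dom_pow D A n = {x. \<forall>k<n. (A ^^ k) x \<in> D}"

definition closed_operator :: "'a::topological_space set \<Rightarrow> ('a \<Rightarrow> 'a) \<Rightarrow> bool" where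
  "closed_operator D T \<longleftrightarrow> closed {(x, T x) | x. x \<in> D}"

definition uncond_conv :: "(nat \<Rightarrow> 'a::real_normed_vector) \<Rightarrow> bool" where
  "uncond_conv x \<longleftrightarrow> (\<forall>\<epsilon>>0. \<exists>N. \<forall>F. finite F \<and> F \<subseteq> {1..} \<and> F \<inter> {1..N} = {}
        \<longrightarrow> norm (\<Sum>k\<in>F. x k) < \<epsilon>)"

definition lower_density :: "nat set \<Rightarrow> ereal" where
  "lower_density E = liminf (\<lambda>N. ereal (real (card (E \<inter> {1..N})) / real N))"

definition freq_hypercyclic :: "'a::topological_space set \<Rightarrow> ('a \<Rightarrow> 'a) \<Rightarrow> bool" where
  "freq_hypercyclic D T \<longleftrightarrow> (\<exists>f\<in>D. (\<forall>m\<ge>1. (T ^^ m) f \<in> D) \<and>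
      (\<forall>U. open U \<and> U \<noteq> {} \<longrightarrow> lower_density {m. (T ^^ m) f \<in> U} > 0))"

definition separable_space :: "'a::topological_space itself \<Rightarrow> bool" where
  "separable_space _ \<longleftrightarrow> (\<exists>S::'a set. countable S \<and> closure S = UNIV)"

definition infinite_dim :: "'a::real_vector itself \<Rightarrow> bool" where
  "infinite_dim _ \<longleftrightarrow> \<not> (\<exists>S::'a set. finite S \<and> span S = UNIV)"

end

theory Submission
  imports Defs
begin

(* Choose y_0, y_1, ... in X0 coming arbitrarily close to every point with arbitrarily large
   index, and a strictly increasing N such that for j <= l all finite tails beyond N_l of the
   series sum_i A^i y_j and sum_i B^i y_j have norm at most 2^-(l+1) / (l+1); the factor
   1/(l+1) pays for the at most l+1 labels j <= l.  Arithmetic progressions with holes give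
   pairwise disjoint sets S_l of positive lower density whose elements are far apart:
   k in S_j, k' in S_j', k < k' imply k + N_j + N_j' <= k'.  Let f be the sum of B^(n k) y_l
   over all l and k in S_l.  As A^r is closed, f lies in every D(A^r), and for m in S_l the
   series for A^(n m) f consists of y_l plus, for each label j, a tail beyond N_(max j l) of
   the A- or B-series of y_j.  So A^(n m) f lies within 2 * 2^-l of y_l, and the visits of
   the A^n-orbit of f to a ball around y_l include S_l. *)

lemma sum_half_powers_le:
  assumes "finite J" "\<And>j. j \<in> J \<Longrightarrow> l \<le> j"
  shows "(\<Sum>j\<in>J. (1/2::real) ^ j) \<le> 2 * (1/2) ^ l"
proof -
  have "inj_on (\<lambda>j. j - l) J" using assms(2) by (intro inj_onI) (metis le_add_diff_inverse)
  then have "(\<Sum>j\<in>J. (1/2::real) ^ j) = (1/2) ^ l * (\<Sum>i\<in>(\<lambda>j. j - l) ` J. (1/2) ^ i)"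
    using assms(2) by (simp add: sum.reindex sum_distrib_left flip: power_add)
  also have "(\<Sum>i\<in>(\<lambda>j. j - l) ` J. (1/2::real) ^ i) \<le> (\<Sum>i. (1/2) ^ i)"
    using assms(1) by (intro sum_le_suminf) auto
  also have "(\<Sum>i. (1/2::real) ^ i) = 2" using suminf_geometric[of "1/2::real"] by simp
  finally show ?thesis by simp
qed

lemma sum_label_weights_le:
  assumes "finite J"
  shows "(\<Sum>j\<in>J. (1/2::real) ^ max j l / real (max j l + 1)) \<le> 2 * (1/2) ^ l"
proof -
  let ?w = "\<lambda>j. (1/2::real) ^ max j l / real (max j l + 1)"
  have "(\<Sum>j\<in>J \<inter> {..l}. ?w j) = card (J \<inter> {..l}) * ((1/2) ^ l / (l + 1))"
    by simp
  also have "\<dots> \<le> (l + 1) * ((1/2) ^ l / (l + 1))"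
    using card_mono[of "{..l}" "J \<inter> {..l}"] by (intro mult_right_mono) auto
  finally have low: "(\<Sum>j\<in>J \<inter> {..l}. ?w j) \<le> (1/2) ^ l" by simp
  have "(\<Sum>j\<in>J - {..l}. ?w j) \<le> (\<Sum>j\<in>J - {..l}. (1/2) ^ j)"
    by (intro sum_mono) (auto simp: max_def divide_le_eq)
  also have "\<dots> \<le> 2 * (1/2) ^ Suc l" using assms by (intro sum_half_powers_le) auto
  finally have high: "(\<Sum>j\<in>J - {..l}. ?w j) \<le> (1/2) ^ l" by simp
  show ?thesis using sum.Int_Diff[OF assms, of ?w "{..l}"] low high by simp
qed

lemma norm_sum_by_label_le:
  fixes W :: "nat \<Rightarrow> 'b \<Rightarrow> 'a::real_normed_vector"
  assumes W: "\<And>l j F. j \<le> l \<Longrightarrow> finite F \<Longrightarrow> \<forall>i\<in>F. N l \<le> h i \<Longrightarrow>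
      norm (sum (W j) F) \<le> (1/2) ^ l / real (l + 1)"
    and G: "finite G" and e: "inj_on e G"
    and far: "\<And>k. k \<in> G \<Longrightarrow> N (max (lab k) l) \<le> h (e k)"
  shows "norm (\<Sum>k\<in>G. W (lab k) (e k)) \<le> 2 * (1/2) ^ l"
proof -
  have "(\<Sum>k\<in>G. W (lab k) (e k)) = (\<Sum>j\<in>lab ` G. \<Sum>k\<in>{k\<in>G. lab k = j}. W (lab k) (e k))"
    using G by (intro sum.group[symmetric]) auto
  also have "\<dots> = (\<Sum>j\<in>lab ` G. sum (W j) (e ` {k\<in>G. lab k = j}))"
    using inj_on_subset[OF e] by (auto simp: sum.reindex intro!: sum.cong)
  finally have "norm (\<Sum>k\<in>G. W (lab k) (e k))
      \<le> (\<Sum>j\<in>lab ` G. norm (sum (W j) (e ` {k\<in>G. lab k = j})))"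
    by (simp add: norm_sum)
  also have "\<dots> \<le> (\<Sum>j\<in>lab ` G. (1/2) ^ max j l / real (max j l + 1))"
  proof (rule sum_mono)
    fix j
    show "norm (sum (W j) (e ` {k\<in>G. lab k = j})) \<le> (1/2) ^ max j l / real (max j l + 1)"
      using G far by (intro W) auto
  qed
  also have "\<dots> \<le> 2 * (1/2) ^ l" using G by (intro sum_label_weights_le) simp
  finally show ?thesis .
qed

section \<open>Separated sets of positive lower density\<close>

(* The factor 2^l * (N l + 1) keeps the points within 2 N_l of multiples of sep_modulus N l,
   for all l > j together, at density at most 1 / (8 * sep_modulus N j). *)
primrec sep_modulus :: "(nat \<Rightarrow> nat) \<Rightarrow> nat \<Rightarrow> nat" where
  "sep_modulus N 0 = 4 * N 0 + 1"
| "sep_modulus N (Suc l) = sep_modulus N l * (128 * 2 ^ Suc l * (N (Suc l) + 1))"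

declare sep_modulus.simps(2) [simp del]

lemma sep_modulus_pos: "0 < sep_modulus N l"
  by (induction l) (simp_all add: sep_modulus.simps)

lemma sep_modulus_Suc_ge: "2 * sep_modulus N l \<le> sep_modulus N (Suc l)"
proof -
  have "2 \<le> 128 * 2 ^ Suc l * (N (Suc l) + 1)"
    using mult_le_mono[OF one_le_power[of 2 "Suc l"] le_add2[of 1 "N (Suc l)"]] by simp
  then show ?thesis by (simp add: sep_modulus.simps mult.commute)
qed

lemma four_N_le_sep_modulus: "4 * N l \<le> sep_modulus N l"
proof (cases l)
  case (Suc p)
  have "4 * N l \<le> 1 * (128 * 2 ^ l * (N l + 1))"
    using mult_le_mono1[OF one_le_power[of 2 l], of "N l + 1"] by simp
  also have "\<dots> \<le> sep_modulus N p * (128 * 2 ^ l * (N l + 1))"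
    using sep_modulus_pos[of N p] by (intro mult_right_mono) auto
  finally show ?thesis using Suc by (simp add: sep_modulus.simps)
qed simp

lemma two_pow_le_sep_modulus: "2 ^ l \<le> sep_modulus N l"
proof (induction l)
  case (Suc l)
  then have "2 ^ Suc l \<le> 2 * sep_modulus N l" by simp
  then show ?case using sep_modulus_Suc_ge by (rule order_trans)
qed simp

lemma sep_modulus_dvd: "l \<le> l' \<Longrightarrow> sep_modulus N l dvd sep_modulus N l'"
  by (induction l' rule: dec_induct) (simp_all add: sep_modulus.simps dvd_mult2)

lemma sep_modulus_mono: "l \<le> l' \<Longrightarrow> sep_modulus N l \<le> sep_modulus N l'"
  using sep_modulus_dvd sep_modulus_pos by (blast intro: dvd_imp_le)

lemma N_div_sep_modulus_le:
  assumes "j < l"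
  shows "real (N l) / sep_modulus N l \<le> (1/2) ^ l / (128 * sep_modulus N j)"
proof -
  obtain p where l: "l = Suc p" and "j \<le> p" using assms by (cases l) auto
  then have Mj: "real (sep_modulus N j) \<le> sep_modulus N p"
    by (simp add: sep_modulus_mono)
  have "real (N l) / sep_modulus N l
      = real (N l) / (real (N l) + 1) / (real (sep_modulus N p) * 128 * 2 ^ l)"
    using l by (simp add: sep_modulus.simps field_simps)
  also have "\<dots> \<le> 1 / (real (sep_modulus N p) * 128 * 2 ^ l)"
    by (intro divide_right_mono) auto
  also have "\<dots> \<le> 1 / (real (sep_modulus N j) * 128 * 2 ^ l)"
    using Mj sep_modulus_pos[of N j] by (intro divide_left_mono) auto
  finally show ?thesis by (simp add: field_simps power_one_over)
qed

definition sep_set :: "(nat \<Rightarrow> nat) \<Rightarrow> nat \<Rightarrow> nat set" where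
  "sep_set N j = {k. 0 < k \<and> sep_modulus N j dvd k \<and> \<not> sep_modulus N (Suc j) dvd k \<and>
     (\<forall>l>j. \<forall>s>0. sep_modulus N l dvd s \<longrightarrow> s + 2 * N l \<le> k \<or> k + 2 * N l \<le> s)}"

lemma sep_set_disjoint: "j \<noteq> j' \<Longrightarrow> sep_set N j \<inter> sep_set N j' = {}"
proof -
  have "sep_set N j \<inter> sep_set N j' = {}" if "j < j'" for j j'
    using sep_modulus_dvd[of "Suc j" j' N] that dvd_trans unfolding sep_set_def by auto
  then show "j \<noteq> j' \<Longrightarrow> sep_set N j \<inter> sep_set N j' = {}"
    by (metis inf_commute nat_neq_iff)
qed

lemma sep_set_ge: "k \<in> sep_set N j \<Longrightarrow> 2 * N j \<le> k"
  using four_N_le_sep_modulus[of N j] dvd_imp_le[of "sep_modulus N j" k]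
  unfolding sep_set_def by auto

lemma sep_set_separated:
  assumes "mono N" "k \<in> sep_set N j" "k' \<in> sep_set N j'" "k < k'"
  shows "k + N j + N j' \<le> k'"
proof -
  consider "j = j'" | "j < j'" | "j' < j" by linarith
  then show ?thesis
  proof cases
    case 1
    have "sep_modulus N j dvd k' - k"
      using assms 1 unfolding sep_set_def by (auto intro: dvd_diff_nat)
    then have "sep_modulus N j \<le> k' - k" using assms by (auto intro: dvd_imp_le)
    then show ?thesis using four_N_le_sep_modulus[of N j] assms(4) unfolding 1 by linarith
  next
    case 2
    then have "k' + 2 * N j' \<le> k \<or> k + 2 * N j' \<le> k'" "N j \<le> N j'"
      using assms unfolding sep_set_def by (blast, simp add: monoD)
    then show ?thesis using assms(4) by linarith
  next
    case 3
    then have "k + 2 * N j \<le> k' \<or> k' + 2 * N j \<le> k" "N j' \<le> N j"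
      using assms unfolding sep_set_def by (blast, simp add: monoD)
    then show ?thesis using assms(4) by linarith
  qed
qed

lemma card_multiples_atLeastAtMost:
  fixes M :: nat
  assumes "0 < M"
  shows "card {k \<in> {1..x}. M dvd k} = x div M"
proof -
  have "{k \<in> {1..x}. M dvd k} = (\<lambda>i. M * i) ` {1..x div M}"
  proof safe
    fix k assume k: "k \<in> {1..x}" "M dvd k"
    then obtain i where "k = M * i" by blast
    with k assms show "k \<in> (\<lambda>i. M * i) ` {1..x div M}"
      by (auto simp: less_eq_div_iff_mult_less_eq mult.commute intro!: imageI)
  next
    fix i assume "i \<in> {1..x div M}"
    then show "M * i \<in> {1..x}" using assms
      by (auto simp: less_eq_div_iff_mult_less_eq mult.commute)
  qed auto
  moreover have "inj_on (\<lambda>i. M * i) {1..x div M}" using assms by (auto simp: inj_on_def)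
  ultimately show ?thesis by (simp add: card_image)
qed

lemma card_near_multiples_le:
  fixes M w :: nat
  assumes "0 < M"
  shows "real (card (\<Union>s\<in>{s \<in> {1..y}. M dvd s}. {s - w..<s + w})) \<le> 2 * w * real y / M"
proof -
  have "card (\<Union>s\<in>{s \<in> {1..y}. M dvd s}. {s - w..<s + w})
      \<le> (\<Sum>s\<in>{s \<in> {1..y}. M dvd s}. card {s - w..<s + w})"
    by (rule card_UN_le) simp
  also have "\<dots> \<le> (\<Sum>s\<in>{s \<in> {1..y}. M dvd s}. 2 * w)" by (intro sum_mono) auto
  also have "\<dots> = 2 * w * (y div M)"
    using card_multiples_atLeastAtMost[OF assms] by simp
  finally have "real (card (\<Union>s\<in>{s \<in> {1..y}. M dvd s}. {s - w..<s + w})) \<le> 2 * w * real (y div M)"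
    by (metis of_nat_le_iff of_nat_mult)
  also have "\<dots> \<le> 2 * w * (real y / M)" by (intro mult_left_mono of_nat_div_le_of_nat) auto
  finally show ?thesis by simp
qed

lemma card_sep_candidates_ge:
  "real x / (2 * sep_modulus N j) - 1
     \<le> card {k \<in> {1..x}. sep_modulus N j dvd k \<and> \<not> sep_modulus N (Suc j) dvd k}"
proof -
  define M M' where "M = sep_modulus N j" and "M' = sep_modulus N (Suc j)"
  have M: "0 < M" "0 < M'" "2 * M \<le> M'" "M dvd M'"
    unfolding M_def M'_def by (simp_all add: sep_modulus_pos sep_modulus_Suc_ge sep_modulus_dvd)
  then have "{k \<in> {1..x}. M' dvd k} \<subseteq> {k \<in> {1..x}. M dvd k}"
    using dvd_trans by auto
  moreover have "{k \<in> {1..x}. M dvd k \<and> \<not> M' dvd k}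
      = {k \<in> {1..x}. M dvd k} - {k \<in> {1..x}. M' dvd k}" by auto
  ultimately have "card {k \<in> {1..x}. M dvd k \<and> \<not> M' dvd k} = x div M - x div M'"
    using card_multiples_atLeastAtMost[of M] card_multiples_atLeastAtMost[of M'] M
    by (simp add: card_Diff_subset)
  moreover have "x div M' \<le> x div M" using M by (intro div_le_mono2) auto
  moreover have "real x / M - 1 \<le> real (x div M)"
  proof -
    have "x < M * (x div M) + M" using mult_div_mod_eq[of M x] mod_less_divisor[OF M(1), of x] by linarith
    then have "real x < real M * real (x div M) + real M"
      by (simp only: of_nat_add[symmetric] of_nat_mult[symmetric] of_nat_less_iff)
    then show ?thesis using M(1) by (simp add: field_simps)
  qed
  moreover have "real (x div M') \<le> real x / (2 * M)"
  proof -
    have "real (x div M') \<le> real x / M'" by (rule of_nat_div_le_of_nat)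
    also have "\<dots> \<le> real x / (2 * M)"
      using M by (intro divide_left_mono) (simp_all flip: of_nat_le_iff)
    finally show ?thesis .
  qed
  ultimately show ?thesis unfolding M_def M'_def by (simp add: of_nat_diff field_simps)
qed

definition near_sep_multiples :: "(nat \<Rightarrow> nat) \<Rightarrow> nat \<Rightarrow> nat \<Rightarrow> nat set" where
  "near_sep_multiples N j x =
     (\<Union>l\<in>{Suc j..<2 * x}. \<Union>s\<in>{s \<in> {1..2 * x}. sep_modulus N l dvd s}. {s - 2 * N l..<s + 2 * N l})"

lemma card_near_sep_multiples_le:
  "real (card (near_sep_multiples N j x)) \<le> real x / (8 * sep_modulus N j)"
proof -
  let ?near = "\<lambda>l. \<Union>s\<in>{s \<in> {1..2 * x}. sep_modulus N l dvd s}. {s - 2 * N l..<s + 2 * N l}"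
  have "card (near_sep_multiples N j x) \<le> (\<Sum>l\<in>{Suc j..<2 * x}. card (?near l))"
    unfolding near_sep_multiples_def by (rule card_UN_le) simp
  then have "real (card (near_sep_multiples N j x)) \<le> (\<Sum>l\<in>{Suc j..<2 * x}. real (card (?near l)))"
    using of_nat_mono by fastforce
  also have "\<dots> \<le> (\<Sum>l\<in>{Suc j..<2 * x}. 8 * real x * (real (N l) / sep_modulus N l))"
  proof (rule sum_mono)
    fix l
    show "real (card (?near l)) \<le> 8 * real x * (real (N l) / sep_modulus N l)"
      using card_near_multiples_le[of "sep_modulus N l" "2 * N l" "2 * x"] sep_modulus_pos[of N l]
      by (simp add: ac_simps)
  qed
  also have "\<dots> \<le> (\<Sum>l\<in>{Suc j..<2 * x}. real x / (16 * sep_modulus N j) * (1/2) ^ l)"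
  proof (rule sum_mono)
    fix l assume "l \<in> {Suc j..<2 * x}"
    then have "real (N l) / sep_modulus N l \<le> (1/2) ^ l / (128 * sep_modulus N j)"
      by (intro N_div_sep_modulus_le) auto
    then show "8 * real x * (real (N l) / sep_modulus N l) \<le> real x / (16 * sep_modulus N j) * (1/2) ^ l"
      by (auto dest: mult_left_mono[of _ _ "8 * real x"])
  qed
  also have "\<dots> = real x / (16 * sep_modulus N j) * (\<Sum>l\<in>{Suc j..<2 * x}. (1/2) ^ l)"
    by (simp add: sum_distrib_left)
  also have "\<dots> \<le> real x / (16 * sep_modulus N j) * (2 * (1/2) ^ 0)"
    by (intro mult_left_mono sum_half_powers_le) auto
  finally show ?thesis by simp
qed

lemma sep_set_if_not_near:
  assumes "k \<in> {1..x}" "sep_modulus N j dvd k" "\<not> sep_modulus N (Suc j) dvd k"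
    and "k \<notin> near_sep_multiples N j x"
  shows "k \<in> sep_set N j"
  unfolding sep_set_def
proof (intro CollectI conjI allI impI)
  fix l s assume l: "j < l" and s: "0 < s" "sep_modulus N l dvd s"
  show "s + 2 * N l \<le> k \<or> k + 2 * N l \<le> s"
  proof (rule ccontr)
    assume "\<not> ?thesis"
    then have ks: "k < s + 2 * N l" "s < k + 2 * N l" by auto
    have "sep_modulus N l \<le> s" using s by (auto intro: dvd_imp_le)
    then have "4 * N l \<le> s" "l < s"
      using four_N_le_sep_modulus[of N l] two_pow_le_sep_modulus[of l N] less_exp[of l] by linarith+
    then have "s \<in> {s \<in> {1..2 * x}. sep_modulus N l dvd s}" "l \<in> {Suc j..<2 * x}"
      using ks assms(1) l s by auto
    moreover have "k \<in> {s - 2 * N l..<s + 2 * N l}" using ks by auto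
    ultimately have "k \<in> near_sep_multiples N j x"
      unfolding near_sep_multiples_def by blast
    with assms(4) show False ..
  qed
qed (use assms in auto)

lemma sep_set_density:
  assumes "8 * sep_modulus N j \<le> x"
  shows "real x / (4 * sep_modulus N j) \<le> card (sep_set N j \<inter> {1..x})"
proof -
  define Z where "Z = {k \<in> {1..x}. sep_modulus N j dvd k \<and> \<not> sep_modulus N (Suc j) dvd k}"
  have "Z - near_sep_multiples N j x \<subseteq> sep_set N j \<inter> {1..x}"
    unfolding Z_def using sep_set_if_not_near by blast
  then have "card (Z - near_sep_multiples N j x) \<le> card (sep_set N j \<inter> {1..x})"
    by (intro card_mono) auto
  moreover have "card Z - card (near_sep_multiples N j x) \<le> card (Z - near_sep_multiples N j x)"
    by (rule diff_card_le_card_Diff) (simp add: near_sep_multiples_def)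
  ultimately have "real (card Z) - card (near_sep_multiples N j x) \<le> card (sep_set N j \<inter> {1..x})"
    by linarith
  moreover have "1 \<le> real x / (8 * sep_modulus N j)"
    using assms sep_modulus_pos[of N j] by (simp add: field_simps flip: of_nat_mult of_nat_le_iff)
  ultimately show ?thesis
    using card_sep_candidates_ge[of x N j] card_near_sep_multiples_le[of N j x]
    unfolding Z_def by (simp add: field_simps)
qed

lemma lower_density_mono: "E \<subseteq> E' \<Longrightarrow> lower_density E \<le> lower_density E'"
  unfolding lower_density_def
  by (intro Liminf_mono always_eventually allI ereal_less_eq(3)[THEN iffD2] divide_right_mono)
    (auto intro: card_mono)

lemma lower_density_pos:
  assumes "0 < d" and "\<And>x. x0 \<le> x \<Longrightarrow> d * real x \<le> card (E \<inter> {1..x})"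
  shows "0 < lower_density E"
proof -
  have "eventually (\<lambda>x. ereal d \<le> ereal (real (card (E \<inter> {1..x})) / real x)) sequentially"
    unfolding eventually_sequentially
  proof (intro exI[of _ "max x0 1"] allI impI)
    fix x assume "max x0 1 \<le> x"
    then show "ereal d \<le> ereal (real (card (E \<inter> {1..x})) / real x)"
      using assms(2)[of x] by (simp add: field_simps)
  qed
  then have "ereal d \<le> lower_density E" unfolding lower_density_def by (rule Liminf_bounded)
  moreover have "0 < ereal d" using assms(1) by simp
  ultimately show ?thesis by (rule less_le_trans[rotated])
qed

lemma lower_density_sep_set_pos: "0 < lower_density (sep_set N j)"
  using sep_modulus_pos[of N j] sep_set_density[of N j]
  by (intro lower_density_pos[of "1 / (4 * sep_modulus N j)" "8 * sep_modulus N j"]) auto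

section \<open>Powers of an unbounded operator\<close>

lemma dom_pow_Suc: "dom_pow D A (Suc r) = {x \<in> dom_pow D A r. (A ^^ r) x \<in> D}"
  by (auto simp: dom_pow_def less_Suc_eq)

lemma funpow_in_dom_pow:
  assumes "x \<in> dom_pow D A (r + s)"
  shows "(A ^^ r) x \<in> dom_pow D A s"
  unfolding dom_pow_def
proof (intro CollectI allI impI)
  fix k assume "k < s"
  then have "(A ^^ (k + r)) x \<in> D" using assms by (simp add: dom_pow_def)
  then show "(A ^^ k) ((A ^^ r) x) \<in> D" by (simp add: funpow_add)
qed

context
  fixes D :: "'a::real_vector set" and A :: "'a \<Rightarrow> 'a"
  assumes lin: "linear_operator_on D A"
begin

lemma dom_pow_zero: "0 \<in> dom_pow D A r" "(A ^^ r) 0 = 0"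
proof -
  have D0: "0 \<in> D" using lin unfolding linear_operator_on_def by (simp add: subspace_0)
  then have "A ((0::real) *\<^sub>R 0) = (0::real) *\<^sub>R A 0"
    using lin unfolding linear_operator_on_def by blast
  then have "A 0 = 0" by simp
  then have "(A ^^ r) 0 = 0" for r by (induction r) simp_all
  with D0 show "0 \<in> dom_pow D A r" "(A ^^ r) 0 = 0" by (auto simp: dom_pow_def)
qed

lemma dom_pow_add:
  "x \<in> dom_pow D A r \<Longrightarrow> y \<in> dom_pow D A r \<Longrightarrow>
    x + y \<in> dom_pow D A r \<and> (A ^^ r) (x + y) = (A ^^ r) x + (A ^^ r) y"
proof (induction r)
  case (Suc r)
  then have "(A ^^ r) x \<in> D" "(A ^^ r) y \<in> D" "x + y \<in> dom_pow D A r"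
    and IH: "(A ^^ r) (x + y) = (A ^^ r) x + (A ^^ r) y"
    by (simp_all add: dom_pow_Suc)
  with lin show ?case
    unfolding linear_operator_on_def by (simp add: dom_pow_Suc subspace_add)
qed (simp add: dom_pow_def)

lemma dom_pow_sum:
  "finite F \<Longrightarrow> (\<And>k. k \<in> F \<Longrightarrow> g k \<in> dom_pow D A r) \<Longrightarrow>
    sum g F \<in> dom_pow D A r \<and> (A ^^ r) (sum g F) = (\<Sum>k\<in>F. (A ^^ r) (g k))"
  by (induction F rule: finite_induct) (simp_all add: dom_pow_zero dom_pow_add)

end

lemma closed_operator_limit:
  assumes "closed_operator D T" "\<And>K. s K \<in> D" "s \<longlonglongrightarrow> x" "(\<lambda>K. T (s K)) \<longlonglongrightarrow> y"
  shows "x \<in> D \<and> T x = y"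
proof -
  have graph: "closed {(x, T x) | x. x \<in> D}" using assms(1) unfolding closed_operator_def .
  have "(s K, T (s K)) \<in> {(x, T x) | x. x \<in> D}" for K using assms(2) by blast
  with graph have "(x, y) \<in> {(x, T x) | x. x \<in> D}"
    by (rule closed_sequentially) (rule tendsto_Pair[OF assms(3,4)])
  then show ?thesis by blast
qed

section \<open>Dense sequences and uniform tails\<close>

lemma uncond_conv_tail:
  assumes "uncond_conv u" "0 < \<epsilon>"
  obtains K where "\<And>F. finite F \<Longrightarrow> \<forall>i\<in>F. K < i \<Longrightarrow> norm (sum u F) < \<epsilon>"
proof -
  obtain K where K: "\<forall>F. finite F \<and> F \<subseteq> {1..} \<and> F \<inter> {1..K} = {} \<longrightarrow> norm (sum u F) < \<epsilon>"
    using assms unfolding uncond_conv_def by blast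
  show thesis
  proof (rule that)
    fix F :: "nat set" assume "finite F" "\<forall>i\<in>F. K < i"
    then have "F \<subseteq> {1..}" "F \<inter> {1..K} = {}" by auto
    with K \<open>finite F\<close> show "norm (sum u F) < \<epsilon>" by blast
  qed
qed

lemma uncond_conv_uniform_tails:
  assumes "\<And>j. uncond_conv (u j)" "\<And>l. 0 < \<epsilon> l"
  obtains N :: "nat \<Rightarrow> nat" where "strict_mono N"
    "\<And>l j F. j \<le> l \<Longrightarrow> finite F \<Longrightarrow> \<forall>i\<in>F. N l \<le> i \<Longrightarrow> norm (sum (u j) F) \<le> \<epsilon> l"
proof -
  have "\<forall>j l. \<exists>K. \<forall>F. finite F \<longrightarrow> (\<forall>i\<in>F. K < i) \<longrightarrow> norm (sum (u j) F) < \<epsilon> l"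
  proof (intro allI)
    fix j l
    show "\<exists>K. \<forall>F. finite F \<longrightarrow> (\<forall>i\<in>F. K < i) \<longrightarrow> norm (sum (u j) F) < \<epsilon> l"
      using uncond_conv_tail[OF assms(1)[of j] assms(2)[of l]] by blast
  qed
  then obtain K where K: "\<And>j l F. finite F \<Longrightarrow> \<forall>i\<in>F. K j l < i \<Longrightarrow> norm (sum (u j) F) < \<epsilon> l"
    unfolding choice_iff by blast
  define N where "N l = Suc ((\<Sum>i\<le>l. \<Sum>j\<le>i. K j i) + l)" for l
  show thesis
  proof
    show "strict_mono N" unfolding strict_mono_Suc_iff N_def by simp
  next
    fix l j F assume "j \<le> l" "finite F" "\<forall>i\<in>F. N l \<le> i"
    have "K j l \<le> (\<Sum>j'\<le>l. K j' l)"
      using \<open>j \<le> l\<close> by (intro member_le_sum) auto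
    also have "\<dots> \<le> (\<Sum>i\<le>l. \<Sum>j'\<le>i. K j' i)"
      by (rule member_le_sum[of l "{..l}" "\<lambda>i. \<Sum>j'\<le>i. K j' i"]) auto
    finally have "\<forall>i\<in>F. K j l < i" using \<open>\<forall>i\<in>F. N l \<le> i\<close> unfolding N_def by fastforce
    with K \<open>finite F\<close> show "norm (sum (u j) F) \<le> \<epsilon> l" by (simp add: less_imp_le)
  qed
qed

lemma countable_dense_subset:
  fixes X0 :: "'a::metric_space set"
  assumes "separable_space TYPE('a)" "closure X0 = UNIV"
  obtains C where "C \<subseteq> X0" "countable C" "closure C = UNIV"
proof -
  obtain S :: "'a set" where S: "countable S" "closure S = UNIV"
    using assms(1) unfolding separable_space_def by blast
  have "\<forall>s q. \<exists>x. x \<in> X0 \<and> dist x s < inverse (Suc q)"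
  proof (intro allI)
    fix s and q :: nat
    have "s \<in> closure X0" "0 < inverse (real (Suc q))" using assms(2) by simp_all
    then show "\<exists>x. x \<in> X0 \<and> dist x s < inverse (Suc q)" unfolding closure_approachable by blast
  qed
  then obtain c where c: "\<And>s q. c s q \<in> X0 \<and> dist (c s q) s < inverse (Suc q)"
    unfolding choice_iff by blast
  show thesis
  proof
    show "case_prod c ` (S \<times> UNIV) \<subseteq> X0" using c by auto
    show "countable (case_prod c ` (S \<times> UNIV))" using S(1) by simp
    have "z \<in> closure (case_prod c ` (S \<times> UNIV))" for z
    proof (rule iffD2[OF closure_approachable], intro allI impI)
      fix e :: real assume "0 < e"
      then obtain s where "s \<in> S" "dist s z < e / 2"
        using S(2) closure_approachable[of z S] by (metis UNIV_I half_gt_zero)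
      obtain q where "inverse (Suc q) < e / 2" using reals_Archimedean \<open>0 < e\<close> half_gt_zero by blast
      then have "dist (c s q) z < e" using \<open>dist s z < e / 2\<close> c[of s q] dist_triangle[of "c s q" z s] by linarith
      with \<open>s \<in> S\<close> show "\<exists>x\<in>case_prod c ` (S \<times> UNIV). dist x z < e" by force
    qed
    then show "closure (case_prod c ` (S \<times> UNIV)) = UNIV" by blast
  qed
qed

lemma recurrent_dense_sequence:
  fixes X0 :: "'a::metric_space set"
  assumes "separable_space TYPE('a)" "closure X0 = UNIV"
  obtains y :: "nat \<Rightarrow> 'a" where "\<And>l. y l \<in> X0" "\<And>z \<rho> L. 0 < \<rho> \<Longrightarrow> \<exists>l\<ge>L. dist (y l) z < \<rho>"
proof -
  obtain C where C: "C \<subseteq> X0" "countable C" "closure C = UNIV"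
    using countable_dense_subset[OF assms] .
  then have "C \<noteq> {}" by auto
  define y where "y l = from_nat_into C (fst (prod_decode l))" for l
  show thesis
  proof
    show "y l \<in> X0" for l using C(1) from_nat_into[OF \<open>C \<noteq> {}\<close>] unfolding y_def by blast
  next
    fix z and \<rho> :: real and L assume "0 < \<rho>"
    then obtain c where "c \<in> C" "dist c z < \<rho>" using C(3) closure_approachable[of z C] by auto
    moreover obtain a where "from_nat_into C a = c" using from_nat_into_surj[OF C(2) \<open>c \<in> C\<close>] ..
    ultimately have "y (prod_encode (a, L)) = c" unfolding y_def by simp
    with \<open>dist c z < \<rho>\<close> show "\<exists>l\<ge>L. dist (y l) z < \<rho>"
      by (intro exI[of _ "prod_encode (a, L)"]) (simp add: le_prod_encode_2)
  qed
qed

section \<open>The frequently hypercyclic vector\<close>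

locale freq_hypercyclic_construction =
  fixes D :: "'a::banach set" and A B :: "'a \<Rightarrow> 'a" and X0 :: "'a set"
    and n :: nat and y :: "nat \<Rightarrow> 'a" and N :: "nat \<Rightarrow> nat"
  assumes lin: "linear_operator_on D A"
    and closed_pow: "\<And>r. r \<ge> 1 \<Longrightarrow> closed_operator (dom_pow D A r) (A ^^ r)"
    and X0_dom_pow: "X0 \<subseteq> (\<Inter>r. dom_pow D A r)"
    and B_X0: "\<And>x. x \<in> X0 \<Longrightarrow> B x \<in> X0"
    and A_B: "\<And>x. x \<in> X0 \<Longrightarrow> A (B x) = x"
    and n_pos: "n \<ge> 1"
    and y_X0: "\<And>l. y l \<in> X0"
    and y_recurrent: "\<And>z \<rho> L. 0 < \<rho> \<Longrightarrow> \<exists>l\<ge>L. dist (y l) z < \<rho>"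
    and N_strict_mono: "strict_mono N"
    and tail_A: "\<And>l j F. j \<le> l \<Longrightarrow> finite F \<Longrightarrow> \<forall>i\<in>F. N l \<le> i \<Longrightarrow>
      norm (\<Sum>i\<in>F. (A ^^ i) (y j)) \<le> (1/2) ^ Suc l / real (l + 1)"
    and tail_B: "\<And>l j F. j \<le> l \<Longrightarrow> finite F \<Longrightarrow> \<forall>i\<in>F. N l \<le> i \<Longrightarrow>
      norm (\<Sum>i\<in>F. (B ^^ i) (y j)) \<le> (1/2) ^ Suc l / real (l + 1)"
begin

(* B acts as a right inverse of A, so orbit j d stands for A^(-d) y_j. *)
definition orbit :: "nat \<Rightarrow> int \<Rightarrow> 'a" where
  "orbit j d = (if 0 \<le> d then (B ^^ nat d) (y j) else (A ^^ nat (- d)) (y j))"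

lemma funpow_B_X0: "x \<in> X0 \<Longrightarrow> (B ^^ q) x \<in> X0"
  by (induction q) (simp_all add: B_X0)

lemma orbit_nonneg_in_X0: "0 \<le> d \<Longrightarrow> orbit j d \<in> X0"
  by (simp add: orbit_def funpow_B_X0 y_X0)

lemma A_orbit: "A (orbit j d) = orbit j (d - 1)"
proof -
  consider "1 \<le> d" | "d = 0" | "d < 0" by linarith
  then show ?thesis
  proof cases
    case 1
    then have "nat d = Suc (nat (d - 1))" by simp
    then show ?thesis using 1 A_B[OF funpow_B_X0[OF y_X0]] by (simp add: orbit_def)
  next
    case 2
    then show ?thesis by (simp add: orbit_def)
  next
    case 3
    then have "nat (- (d - 1)) = Suc (nat (- d))" by simp
    then show ?thesis using 3 by (simp add: orbit_def)
  qed
qed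

lemma funpow_A_orbit: "(A ^^ r) (orbit j d) = orbit j (d - int r)"
  by (induction r) (simp_all add: A_orbit algebra_simps)

lemma norm_sum_orbit_le:
  assumes "j \<le> l" "finite F" "\<forall>d\<in>F. N l \<le> nat \<bar>d\<bar>"
  shows "norm (sum (orbit j) F) \<le> (1/2) ^ l / real (l + 1)"
proof -
  let ?Fp = "{d \<in> F. 0 \<le> d}" and ?Fm = "{d \<in> F. d < 0}"
  have "sum (orbit j) ?Fp = (\<Sum>i\<in>nat ` ?Fp. (B ^^ i) (y j))"
    by (subst sum.reindex) (auto simp: inj_on_def orbit_def)
  also have "norm \<dots> \<le> (1/2) ^ Suc l / real (l + 1)"
    using assms by (intro tail_B) auto
  finally have Fp: "norm (sum (orbit j) ?Fp) \<le> (1/2) ^ Suc l / real (l + 1)" .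
  have "sum (orbit j) ?Fm = (\<Sum>i\<in>(\<lambda>d. nat (- d)) ` ?Fm. (A ^^ i) (y j))"
    by (subst sum.reindex) (auto simp: inj_on_def orbit_def)
  also have "norm \<dots> \<le> (1/2) ^ Suc l / real (l + 1)"
    using assms by (intro tail_A) auto
  finally have Fm: "norm (sum (orbit j) ?Fm) \<le> (1/2) ^ Suc l / real (l + 1)" .
  have "sum (orbit j) F = sum (orbit j) ?Fp + sum (orbit j) ?Fm"
    using assms(2) by (subst sum.union_disjoint[symmetric]) (auto intro: sum.cong)
  then have "norm (sum (orbit j) F) \<le> 2 * ((1/2) ^ Suc l / real (l + 1))"
    using Fp Fm norm_triangle_ineq[of "sum (orbit j) ?Fp" "sum (orbit j) ?Fm"] by simp
  also have "\<dots> = (1/2) ^ l / real (l + 1)" by (simp add: divide_simps)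
  finally show ?thesis .
qed

definition supp :: "nat set" where "supp = (\<Union>j. sep_set N j)"

definition lab :: "nat \<Rightarrow> nat" where "lab k = (SOME j. k \<in> sep_set N j)"

definition v :: "nat \<Rightarrow> nat \<Rightarrow> 'a" where
  "v r k = (if k \<in> supp then orbit (lab k) (int (n * k) - int r) else 0)"

definition f :: 'a where "f = (\<Sum>k. v 0 k)"

lemma lab_eq: "k \<in> sep_set N j \<Longrightarrow> lab k = j"
  unfolding lab_def by (rule some_equality) (use sep_set_disjoint in blast)+

lemma sep_set_lab: "k \<in> supp \<Longrightarrow> k \<in> sep_set N (lab k)"
  unfolding supp_def using lab_eq by blast

lemma norm_sum_v_le:
  assumes "finite G"
    and far: "\<And>k. k \<in> G \<Longrightarrow> k \<in> supp \<Longrightarrow>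
      N (max (lab k) l) + r \<le> n * k \<or> N (max (lab k) l) + n * k \<le> r"
  shows "norm (sum (v r) G) \<le> 2 * (1/2) ^ l"
proof -
  have "sum (v r) G = (\<Sum>k\<in>G \<inter> supp. orbit (lab k) (int (n * k) - int r))"
    using assms(1) unfolding v_def by (simp only: sum.inter_restrict)
  also have "norm \<dots> \<le> 2 * (1/2) ^ l"
  proof (rule norm_sum_by_label_le[where h = "\<lambda>d. nat \<bar>d\<bar>"])
    show "inj_on (\<lambda>k. int (n * k) - int r) (G \<inter> supp)" using n_pos by (auto simp: inj_on_def)
  next
    fix k assume "k \<in> G \<inter> supp"
    with far have "N (max (lab k) l) + r \<le> n * k \<or> N (max (lab k) l) + n * k \<le> r" by blast
    then show "N (max (lab k) l) \<le> nat \<bar>int (n * k) - int r\<bar>" by arith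
  qed (use assms norm_sum_orbit_le in auto)
  finally show ?thesis .
qed

lemma summable_v: "summable (v r)"
  unfolding summable_Cauchy
proof (intro allI impI)
  fix e :: real assume "0 < e"
  then obtain l0 where "(1/2::real) ^ l0 < e / 2"
    using real_arch_pow_inv[of "e / 2" "1/2"] by auto
  moreover have "(1/2::real) ^ (l0 + r) \<le> (1/2) ^ l0" by (intro power_decreasing) auto
  ultimately have l: "2 * (1/2::real) ^ (l0 + r) < e" by linarith
  have "norm (sum (v r) {a..<b}) \<le> 2 * (1/2) ^ (l0 + r)" if a: "N (l0 + r) + r \<le> a" for a b
  proof (rule norm_sum_v_le)
    fix k assume k: "k \<in> {a..<b}" "k \<in> supp"
    have "a \<le> k" "k \<le> n * k" using k(1) n_pos by simp_all
    have "N (max (lab k) (l0 + r)) + r \<le> n * k"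
    proof (cases "lab k \<le> l0 + r")
      case True
      then have "max (lab k) (l0 + r) = l0 + r" by simp
      with a \<open>a \<le> k\<close> \<open>k \<le> n * k\<close> show ?thesis by (simp only:)
    next
      case False
      then have "r < N (lab k)"
        using strict_mono_imp_increasing[OF N_strict_mono, of "lab k"] by linarith
      moreover have "2 * N (lab k) \<le> k" using sep_set_ge[OF sep_set_lab[OF k(2)]] .
      moreover have "max (lab k) (l0 + r) = lab k" using False by simp
      ultimately show ?thesis using \<open>k \<le> n * k\<close> by (simp only:)
    qed
    then show "N (max (lab k) (l0 + r)) + r \<le> n * k \<or> N (max (lab k) (l0 + r)) + n * k \<le> r" ..
  qed simp
  with l show "\<exists>M. \<forall>m\<ge>M. \<forall>n. norm (sum (v r) {m..<n}) < e"
    by (meson order.strict_trans1)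
qed

lemma v_0_in_dom_pow: "v 0 k \<in> dom_pow D A r"
proof (cases "k \<in> supp")
  case True
  then have "v 0 k \<in> X0" by (simp add: v_def orbit_nonneg_in_X0)
  then show ?thesis using X0_dom_pow by blast
qed (simp add: v_def dom_pow_zero[OF lin])

lemma funpow_v_0: "(A ^^ r) (v 0 k) = v r k"
  by (simp add: v_def funpow_A_orbit dom_pow_zero[OF lin])

lemma f_in_dom_pow: "f \<in> dom_pow D A r" and funpow_f: "(A ^^ r) f = (\<Sum>k. v r k)"
proof -
  have partial_sums: "(\<Sum>k<K. v 0 k) \<in> dom_pow D A r \<and> (A ^^ r) (\<Sum>k<K. v 0 k) = (\<Sum>k<K. v r k)" for K
    using dom_pow_sum[OF lin, of "{..<K}" "v 0" r] v_0_in_dom_pow by (simp add: funpow_v_0)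
  have "f \<in> dom_pow D A r \<and> (A ^^ r) f = (\<Sum>k. v r k)"
  proof (cases "r = 0")
    case True
    then show ?thesis by (simp add: dom_pow_def f_def)
  next
    case False
    show ?thesis
    proof (rule closed_operator_limit[OF closed_pow])
      show "(\<lambda>K. \<Sum>k<K. v 0 k) \<longlonglongrightarrow> f" unfolding f_def by (rule summable_LIMSEQ[OF summable_v])
      show "(\<lambda>K. (A ^^ r) (\<Sum>k<K. v 0 k)) \<longlonglongrightarrow> (\<Sum>k. v r k)"
        using summable_LIMSEQ[OF summable_v, of r] partial_sums by simp
    qed (use False partial_sums in auto)
  qed
  then show "f \<in> dom_pow D A r" "(A ^^ r) f = (\<Sum>k. v r k)" by auto
qed

lemma far_from_sep_point:
  assumes m: "m \<in> sep_set N l" and k: "k \<in> supp" "k \<noteq> m"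
  shows "N (max (lab k) l) + n * m \<le> n * k \<or> N (max (lab k) l) + n * k \<le> n * m"
proof -
  have mono: "mono N" using N_strict_mono by (rule strict_mono_mono)
  have N_max: "N (max (lab k) l) \<le> N l + N (lab k)" by (simp add: max_def)
  have k_lab: "k \<in> sep_set N (lab k)" using k(1) by (rule sep_set_lab)
  have step: "N (max (lab k) l) + n * a \<le> n * (a + d)" if "N l + N (lab k) \<le> d" for a d
  proof -
    have "d \<le> n * d" using n_pos by simp
    moreover have "n * (a + d) = n * a + n * d" by (rule distrib_left)
    ultimately show ?thesis using N_max that by linarith
  qed
  consider "m < k" | "k < m" using k(2) by linarith
  then show ?thesis
  proof cases
    case 1
    then have "N l + N (lab k) \<le> k - m" using sep_set_separated[OF mono m k_lab] by linarith
    then show ?thesis using step[of "k - m" m] 1 by simp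
  next
    case 2
    then have "N l + N (lab k) \<le> m - k" using sep_set_separated[OF mono k_lab m] by linarith
    then show ?thesis using step[of "m - k" k] 2 by simp
  qed
qed

lemma dist_iterate_le:
  assumes m: "m \<in> sep_set N l"
  shows "dist ((A ^^ (n * m)) f) (y l) \<le> 2 * (1/2) ^ l"
proof -
  have "m \<in> supp" using m unfolding supp_def by blast
  then have v_m: "v (n * m) m = y l" by (simp add: v_def orbit_def lab_eq[OF m])
  have "norm ((\<Sum>k<K. v (n * m) k) - y l) \<le> 2 * (1/2) ^ l" if "m < K" for K
  proof -
    have "(\<Sum>k<K. v (n * m) k) - y l = sum (v (n * m)) ({..<K} - {m})"
      using that v_m by (simp add: sum.remove)
    also have "norm \<dots> \<le> 2 * (1/2) ^ l"
      using far_from_sep_point[OF m] by (intro norm_sum_v_le) auto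
    finally show ?thesis .
  qed
  moreover have "(\<lambda>K. norm ((\<Sum>k<K. v (n * m) k) - y l)) \<longlonglongrightarrow> dist ((A ^^ (n * m)) f) (y l)"
    unfolding funpow_f dist_norm by (intro tendsto_intros summable_LIMSEQ summable_v)
  ultimately show ?thesis by (intro LIMSEQ_le_const2) (auto intro: exI[of _ "Suc m"])
qed

theorem freq_hypercyclic: "freq_hypercyclic (dom_pow D A n) (A ^^ n)"
  unfolding freq_hypercyclic_def
proof (intro bexI[of _ f] conjI allI impI)
  fix m
  show "((A ^^ n) ^^ m) f \<in> dom_pow D A n"
    using funpow_in_dom_pow[OF f_in_dom_pow[of "n * m + n"]] by (simp add: funpow_mult)
next
  fix U :: "'a set" assume "open U \<and> U \<noteq> {}"
  then obtain z \<rho> where "0 < \<rho>" "ball z \<rho> \<subseteq> U" by (meson ex_in_conv openE)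
  then obtain L where L: "(1/2::real) ^ L < \<rho> / 4" using real_arch_pow_inv[of "\<rho> / 4" "1/2"] by auto
  obtain l where l: "L \<le> l" "dist (y l) z < \<rho> / 2" using y_recurrent \<open>0 < \<rho>\<close> half_gt_zero by blast
  have "sep_set N l \<subseteq> {m. ((A ^^ n) ^^ m) f \<in> U}"
  proof
    fix m assume "m \<in> sep_set N l"
    then have "dist ((A ^^ (n * m)) f) (y l) \<le> 2 * (1/2) ^ l" by (rule dist_iterate_le)
    also have "\<dots> \<le> 2 * (1/2) ^ L" using l(1) by (intro mult_left_mono power_decreasing) auto
    finally have "dist z ((A ^^ (n * m)) f) < \<rho>"
      using L l(2) dist_triangle2[of z "(A ^^ (n * m)) f" "y l"] dist_commute[of z "y l"] by linarith
    then show "m \<in> {m. ((A ^^ n) ^^ m) f \<in> U}" using \<open>ball z \<rho> \<subseteq> U\<close> by (auto simp: funpow_mult)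
  qed
  then show "0 < lower_density {m. ((A ^^ n) ^^ m) f \<in> U}"
    using lower_density_sep_set_pos lower_density_mono less_le_trans by blast
qed (rule f_in_dom_pow)

end

theorem corollary2p4:
  fixes D :: "'a::banach set" and A :: "'a \<Rightarrow> 'a"
    and X0 :: "'a set" and B :: "'a \<Rightarrow> 'a"
  assumes "infinite_dim TYPE('a)"
    and "separable_space TYPE('a)"
    and "linear_operator_on D A"
    and "closure D = UNIV"
    and "\<And>r. r \<ge> 1 \<Longrightarrow> closed_operator (dom_pow D A r) (A ^^ r)"
    and "X0 \<subseteq> (\<Inter>n. dom_pow D A n)"
    and "closure X0 = UNIV"
    and "\<And>x. x \<in> X0 \<Longrightarrow> B x \<in> X0"
    and "\<And>x. x \<in> X0 \<Longrightarrow> A (B x) = x"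
    and "\<And>x. x \<in> X0 \<Longrightarrow> uncond_conv (\<lambda>n. (A ^^ n) x)"
    and "\<And>x. x \<in> X0 \<Longrightarrow> uncond_conv (\<lambda>n. (B ^^ n) x)"
    and "n \<ge> 1"
  shows "freq_hypercyclic (dom_pow D A n) (A ^^ n)"
proof -
  let ?\<epsilon> = "\<lambda>l. (1/2::real) ^ Suc l / real (l + 1)"
  obtain y :: "nat \<Rightarrow> 'a" where y: "\<And>l. y l \<in> X0" "\<And>z \<rho> L. 0 < \<rho> \<Longrightarrow> \<exists>l\<ge>L. dist (y l) z < \<rho>"
    using recurrent_dense_sequence[OF assms(2,7)] by blast
  obtain NA where NA: "strict_mono NA" "\<And>l j F. j \<le> l \<Longrightarrow> finite F \<Longrightarrow> \<forall>i\<in>F. NA l \<le> i \<Longrightarrow>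
      norm (\<Sum>i\<in>F. (A ^^ i) (y j)) \<le> ?\<epsilon> l"
    using uncond_conv_uniform_tails[of "\<lambda>j i. (A ^^ i) (y j)" ?\<epsilon>] assms(10)[OF y(1)] by auto
  obtain NB where NB: "strict_mono NB" "\<And>l j F. j \<le> l \<Longrightarrow> finite F \<Longrightarrow> \<forall>i\<in>F. NB l \<le> i \<Longrightarrow>
      norm (\<Sum>i\<in>F. (B ^^ i) (y j)) \<le> ?\<epsilon> l"
    using uncond_conv_uniform_tails[of "\<lambda>j i. (B ^^ i) (y j)" ?\<epsilon>] assms(11)[OF y(1)] by auto
  interpret freq_hypercyclic_construction D A B X0 n y "\<lambda>l. NA l + NB l"
  proof
    show "strict_mono (\<lambda>l. NA l + NB l)"
      using NA(1) NB(1) by (simp add: strict_mono_def add_strict_mono)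
  next
    fix l j F assume "j \<le> l" "finite F" "\<forall>i\<in>F. NA l + NB l \<le> i"
    then have "\<forall>i\<in>F. NA l \<le> i" "\<forall>i\<in>F. NB l \<le> i" by auto
    with NA(2) NB(2) \<open>j \<le> l\<close> \<open>finite F\<close>
    show "norm (\<Sum>i\<in>F. (A ^^ i) (y j)) \<le> ?\<epsilon> l" "norm (\<Sum>i\<in>F. (B ^^ i) (y j)) \<le> ?\<epsilon> l"
      by blast+
  qed (use assms(3,5,6,8,9,12) y in auto)
  show ?thesis by (rule freq_hypercyclic)
qed

end
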